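(* Let $G$ be a connected BDH graph with color classes $X$ and $Y$. Then there exists an arborescence $A$ whose arc set is in bijection with $X$, say via $x\mapsto\phi x$, such that for every $y\in Y$ the set $\{\phi x\mid x\in N(y)\}$ is the arc set of a directed path in $A$.
   Context: An arborescence is a directed tree with a root $r$ such that every other node is reachable from $r$ by a directed path. A graph is distance hereditary if distances in every connected induced subgraph equal distances in the graph; BDH means bipartite distance hereditary (equivalently: bipartite, no induced chordless cycle of length $\ge6$, no induced domino, a domino being $C_6$ plus a chord between antipodal vertices). $N(y)$ is the neighborhood of $y$. *)

theory Defs
  imports Main
begin

definition simple_graph :: "'a set \<Rightarrow> ('a \<Rightarrow> 'a \<Rightarrow> bool) \<Rightarrow> bool" where
  "simple_graph V E \<longleftrightarrow> finite V \<and> (\<forall>u v. E u v \<longrightarrow> u \<in> V \<and> v \<in> V \<and> u \<noteq> v \<and> E v u)"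

definition walk_in :: "('a \<Rightarrow> 'a \<Rightarrow> bool) \<Rightarrow> 'a set \<Rightarrow> 'a list \<Rightarrow> 'a \<Rightarrow> 'a \<Rightarrow> bool" where
  "walk_in E S p u v \<longleftrightarrow> p \<noteq> [] \<and> hd p = u \<and> last p = v \<and> set p \<subseteq> S \<and>
     (\<forall>i. Suc i < length p \<longrightarrow> E (p ! i) (p ! Suc i))"

definition connected_on :: "('a \<Rightarrow> 'a \<Rightarrow> bool) \<Rightarrow> 'a set \<Rightarrow> bool" where
  "connected_on E S \<longleftrightarrow> (\<forall>u\<in>S. \<forall>v\<in>S. \<exists>p. walk_in E S p u v)"

definition dist_in :: "('a \<Rightarrow> 'a \<Rightarrow> bool) \<Rightarrow> 'a set \<Rightarrow> 'a \<Rightarrow> 'a \<Rightarrow> nat" where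
  "dist_in E S u v = (LEAST n. \<exists>p. walk_in E S p u v \<and> length p = Suc n)"

definition connected_graph :: "'a set \<Rightarrow> ('a \<Rightarrow> 'a \<Rightarrow> bool) \<Rightarrow> bool" where
  "connected_graph V E \<longleftrightarrow> simple_graph V E \<and> connected_on E V"

definition distance_hereditary :: "'a set \<Rightarrow> ('a \<Rightarrow> 'a \<Rightarrow> bool) \<Rightarrow> bool" where
  "distance_hereditary V E \<longleftrightarrow> simple_graph V E \<and>
     (\<forall>S. S \<subseteq> V \<longrightarrow> connected_on E S \<longrightarrow>
        (\<forall>u\<in>S. \<forall>v\<in>S. dist_in E S u v = dist_in E V u v))"

definition bipartite :: "'a set \<Rightarrow> ('a \<Rightarrow> 'a \<Rightarrow> bool) \<Rightarrow> bool" where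
  "bipartite V E \<longleftrightarrow> (\<exists>X Y. X \<union> Y = V \<and> X \<inter> Y = {} \<and>
      (\<forall>u v. E u v \<longrightarrow> (u \<in> X \<and> v \<in> Y) \<or> (u \<in> Y \<and> v \<in> X)))"

definition BDH :: "'a set \<Rightarrow> ('a \<Rightarrow> 'a \<Rightarrow> bool) \<Rightarrow> bool" where
  "BDH V E \<longleftrightarrow> bipartite V E \<and> distance_hereditary V E"

definition color_classes :: "'a set \<Rightarrow> ('a \<Rightarrow> 'a \<Rightarrow> bool) \<Rightarrow> 'a set \<Rightarrow> 'a set \<Rightarrow> bool" where
  "color_classes V E X Y \<longleftrightarrow> X \<union> Y = V \<and> X \<inter> Y = {} \<and>
      (\<forall>u v. E u v \<longrightarrow> (u \<in> X \<and> v \<in> Y) \<or> (u \<in> Y \<and> v \<in> X))"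

definition nbhd :: "'a set \<Rightarrow> ('a \<Rightarrow> 'a \<Rightarrow> bool) \<Rightarrow> 'a \<Rightarrow> 'a set" where
  "nbhd V E y = {x \<in> V. E y x}"

definition arborescence :: "'b set \<Rightarrow> ('b \<times> 'b) set \<Rightarrow> 'b \<Rightarrow> bool" where
  "arborescence W R r \<longleftrightarrow> finite W \<and> r \<in> W \<and> R \<subseteq> W \<times> W \<and>
     (\<forall>w\<in>W. (r, w) \<in> R\<^sup>*) \<and>
     (\<forall>u. (u, r) \<notin> R) \<and>
     (\<forall>w\<in>W. w \<noteq> r \<longrightarrow> (\<exists>!u. (u, w) \<in> R))"

definition dipath_arcs :: "'b set \<Rightarrow> ('b \<times> 'b) set \<Rightarrow> ('b \<times> 'b) set \<Rightarrow> bool" where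
  "dipath_arcs W R P \<longleftrightarrow> (\<exists>vs. vs \<noteq> [] \<and> distinct vs \<and> set vs \<subseteq> W \<and>
     (\<forall>i. Suc i < length vs \<longrightarrow> (vs ! i, vs ! Suc i) \<in> R) \<and>
     P = {(vs ! i, vs ! Suc i) | i. Suc i < length vs})"

end

(*
  Every nonempty connected BDH graph has a vertex z whose deletion keeps it
  connected and which is pendant or has a false twin (a vertex with the same nonempty
  neighbourhood).  To find one, take breadth-first levels from any vertex and a vertex v of
  maximal level with the fewest neighbours among such vertices: if v has two neighbours,
  the distance-hereditary property forbids every induced path that could separate their
  neighbourhoods, so they are false twins.

  Deleting z leaves a connected BDH graph, so by induction it has a representation, which
  we extend.  If z lies in Y, no arc is needed: the image of N(z) is empty, one arc, or the path of
  its twin.  If z lies in X and is pendant, its arc is a new leaf attached at the end of the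
  path of its neighbour.  If z is a false twin of x in X, the arc of x is subdivided and its
  two halves are given to x and z; every y in Y sees both or neither of them, so its path
  stays a path.
*)

theory Submission
  imports Defs
begin

section \<open>Walks, connectivity and distances\<close>

lemma walk_in_singleton: "x \<in> S \<Longrightarrow> walk_in E S [x] x x"
  by (simp add: walk_in_def)

lemma walk_in_subset: "walk_in E S p u v \<Longrightarrow> set p \<subseteq> T \<Longrightarrow> walk_in E T p u v"
  by (auto simp: walk_in_def)

lemma walk_in_last_nth: "walk_in E S p u v \<Longrightarrow> p ! (length p - 1) = v"
  by (auto simp: walk_in_def last_conv_nth)

lemma walk_in_rev:
  assumes sym: "\<And>x y. E x y \<Longrightarrow> E y x" and p: "walk_in E S p u v"
  shows "walk_in E S (rev p) v u"
  unfolding walk_in_def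
proof (intro conjI allI impI)
  show "rev p \<noteq> []" "hd (rev p) = v" "last (rev p) = u" "set (rev p) \<subseteq> S"
    using p by (auto simp: walk_in_def hd_rev last_rev)
  fix i assume i: "Suc i < length (rev p)"
  have "E (p ! (length p - Suc (Suc i))) (p ! Suc (length p - Suc (Suc i)))"
    using p i unfolding walk_in_def by auto
  moreover have "Suc (length p - Suc (Suc i)) = length p - Suc i" using i by simp
  ultimately show "E (rev p ! i) (rev p ! Suc i)"
    using i sym by (simp add: rev_nth)
qed

lemma walk_in_append:
  assumes p: "walk_in E S p u v" and q: "walk_in E S q v w"
  shows "walk_in E S (p @ tl q) u w"
  unfolding walk_in_def
proof (intro conjI allI impI)
  obtain q' where q': "q = v # q'" using q by (cases q) (auto simp: walk_in_def)
  show "p @ tl q \<noteq> []" "hd (p @ tl q) = u" "last (p @ tl q) = w" "set (p @ tl q) \<subseteq> S"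
    using p q q' by (auto simp: walk_in_def last_append)
  fix i assume i: "Suc i < length (p @ tl q)"
  consider "Suc i < length p" | "Suc i = length p" | j where "i = length p + j"
    by (metis add_diff_inverse_nat less_Suc_eq not_less_eq)
  then show "E ((p @ tl q) ! i) ((p @ tl q) ! Suc i)"
  proof cases
    case 1
    then show ?thesis using p by (simp add: walk_in_def nth_append)
  next
    case 2
    then have "i = length p - 1" by simp
    then have "(p @ tl q) ! i = q ! 0" "(p @ tl q) ! Suc i = q ! 1"
      using walk_in_last_nth[OF p] q' 2 by (auto simp: nth_append)
    then show ?thesis using q q' i 2 by (auto simp: walk_in_def)
  next
    case 3
    then have "(p @ tl q) ! i = q ! Suc j" "(p @ tl q) ! Suc i = q ! Suc (Suc j)"
      using q' by (auto simp: nth_append)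
    then show ?thesis using q q' i 3 by (auto simp: walk_in_def)
  qed
qed

lemma walk_in_snoc:
  assumes "walk_in E S p u v" "E v w" "w \<in> S"
  shows "walk_in E S (p @ [w]) u w"
proof -
  have "walk_in E S [v, w] v w" using assms by (auto simp: walk_in_def less_Suc_eq)
  from walk_in_append[OF assms(1) this] show ?thesis by simp
qed

lemma walk_in_take:
  assumes p: "walk_in E S p u v" and i: "i < length p"
  shows "walk_in E S (take (Suc i) p) u (p ! i)"
  unfolding walk_in_def
proof (intro conjI allI impI)
  show "take (Suc i) p \<noteq> []" "hd (take (Suc i) p) = u" using p by (auto simp: walk_in_def)
  show "last (take (Suc i) p) = p ! i" by (simp add: take_Suc_conv_app_nth[OF i])
  show "set (take (Suc i) p) \<subseteq> S" using p by (auto simp: walk_in_def dest: in_set_takeD)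
  fix j assume "Suc j < length (take (Suc i) p)"
  then show "E (take (Suc i) p ! j) (take (Suc i) p ! Suc j)" using p by (auto simp: walk_in_def)
qed

lemma connected_onI_root:
  assumes sym: "\<And>x y. E x y \<Longrightarrow> E y x" and reach: "\<And>x. x \<in> S \<Longrightarrow> \<exists>p. walk_in E S p u x"
  shows "connected_on E S"
  unfolding connected_on_def
proof (intro ballI)
  fix x y assume "x \<in> S" "y \<in> S"
  then obtain p q where "walk_in E S p u x" "walk_in E S q u y" using reach by blast
  then show "\<exists>p. walk_in E S p x y" using walk_in_append walk_in_rev[where E = E, OF sym] by metis
qed

lemma connected_on_walk_vertices:
  assumes sym: "\<And>x y. E x y \<Longrightarrow> E y x" and p: "walk_in E V p u v"
  shows "connected_on E (set p)"
proof (rule connected_onI_root[OF sym])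
  fix x assume "x \<in> set p"
  then obtain i where "i < length p" "x = p ! i" by (metis in_set_conv_nth)
  then show "\<exists>q. walk_in E (set p) q u x"
    using walk_in_take[OF walk_in_subset[OF p order_refl]] by blast
qed

lemma dist_in_le_walk: "walk_in E S p u v \<Longrightarrow> dist_in E S u v \<le> length p - 1"
  unfolding dist_in_def by (rule Least_le) (auto simp: walk_in_def)

lemma shortest_walk_in:
  assumes "connected_on E S" "u \<in> S" "v \<in> S"
  shows "\<exists>p. walk_in E S p u v \<and> length p = Suc (dist_in E S u v)"
proof -
  obtain p where "walk_in E S p u v" using assms by (auto simp: connected_on_def)
  then have "\<exists>n p. walk_in E S p u v \<and> length p = Suc n"
    by (intro exI[of _ "length p - 1"] exI[of _ p]) (auto simp: walk_in_def)
  then show ?thesis unfolding dist_in_def by (rule LeastI_ex)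
qed

lemma walk_in_lipschitz_bound:
  assumes p: "walk_in E S p u v"
    and f: "\<And>x y. x \<in> S \<Longrightarrow> y \<in> S \<Longrightarrow> E x y \<Longrightarrow> f y \<le> f x + (1::int)"
  shows "f v \<le> f u + int (length p - 1)"
proof -
  have "f (p ! i) \<le> f u + int i" if "i < length p" for i
    using that
  proof (induction i)
    case 0
    then show ?case using p by (simp add: walk_in_def hd_conv_nth)
  next
    case (Suc i)
    then have "E (p ! i) (p ! Suc i)" "p ! i \<in> S" "p ! Suc i \<in> S"
      using p by (auto simp: walk_in_def)
    then have "f (p ! Suc i) \<le> f (p ! i) + 1" using f by blast
    then show ?case using Suc by simp
  qed
  moreover have "length p - 1 < length p" using p by (simp add: walk_in_def)
  ultimately show ?thesis using walk_in_last_nth[OF p] by metis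
qed

lemma dist_in_lipschitz_bound:
  assumes "connected_on E S" "u \<in> S" "v \<in> S"
    and "\<And>x y. x \<in> S \<Longrightarrow> y \<in> S \<Longrightarrow> E x y \<Longrightarrow> f y \<le> f x + (1::int)"
  shows "f v \<le> f u + int (dist_in E S u v)"
  using shortest_walk_in[OF assms(1-3)] walk_in_lipschitz_bound[OF _ assms(4)] by fastforce

lemma nbhd_iff: "simple_graph V E \<Longrightarrow> x \<in> nbhd V E y \<longleftrightarrow> E y x"
  by (auto simp: nbhd_def simple_graph_def)

lemma connected_on_delete_twin:
  assumes G: "simple_graph V E" and conn: "connected_on E V"
    and twins: "a \<in> V" "a \<noteq> b" "nbhd V E a = nbhd V E b"
  shows "connected_on E (V - {b})"
  unfolding connected_on_def
proof (intro ballI)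
  fix x y assume xy: "x \<in> V - {b}" "y \<in> V - {b}"
  then obtain p where p: "walk_in E V p x y" using conn by (auto simp: connected_on_def)
  define g where "g t = (if t = b then a else t)" for t
  have b_to_a: "E b t \<Longrightarrow> E a t" for t
    using twins(3) nbhd_iff[OF G] by blast
  have "E (g s) (g t)" if "E s t" for s t
    using that b_to_a G unfolding g_def simple_graph_def by (smt (verit))
  then have "walk_in E (V - {b}) (map g p) x y"
    using p xy twins unfolding walk_in_def by (auto simp: hd_map last_map g_def)
  then show "\<exists>p. walk_in E (V - {b}) p x y" by blast
qed

section \<open>Breadth-first levels of a connected bipartite graph\<close>

locale rooted_bipartite_graph =
  fixes V :: "'a set" and E X Y u
  assumes connected: "connected_graph V E"
    and classes: "color_classes V E X Y"
    and root: "u \<in> V"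
begin

definition level :: "'a \<Rightarrow> nat" where
  "level x = dist_in E V u x"

lemma simple: "simple_graph V E"
  using connected by (simp add: connected_graph_def)

lemma sym: "E x y \<Longrightarrow> E y x" and irrefl: "\<not> E x x"
  and adj_in_V: "E x y \<Longrightarrow> x \<in> V \<and> y \<in> V" and finite_V: "finite V"
  using simple by (auto simp: simple_graph_def)

lemma connected_V: "connected_on E V"
  using connected by (simp add: connected_graph_def)

lemma level_walk: "x \<in> V \<Longrightarrow> \<exists>p. walk_in E V p u x \<and> length p = Suc (level x)"
  using shortest_walk_in[OF connected_V root] by (simp add: level_def)

lemma level_le_walk: "walk_in E V p u x \<Longrightarrow> level x \<le> length p - 1"
  using dist_in_le_walk by (simp add: level_def)

lemma level_nth_le: "walk_in E V p u x \<Longrightarrow> i < length p \<Longrightarrow> level (p ! i) \<le> i"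
  using level_le_walk[OF walk_in_take] by fastforce

lemma level_root: "level u = 0"
  using level_le_walk[OF walk_in_singleton[OF root]] by simp

lemma level_eq_0: "x \<in> V \<Longrightarrow> level x = 0 \<Longrightarrow> x = u"
  using level_walk by (fastforce simp: walk_in_def length_Suc_conv)

lemma level_adj_le: assumes "E x y" shows "level y \<le> level x + 1"
proof -
  obtain p where "walk_in E V p u x" "length p = Suc (level x)"
    using level_walk adj_in_V assms by blast
  from level_le_walk[OF walk_in_snoc[OF this(1) assms]] this(2) adj_in_V assms show ?thesis by simp
qed

lemma walk_colour_parity:
  assumes p: "walk_in E V p a b" and i: "i < length p"
  shows "p ! i \<in> X \<longleftrightarrow> (a \<in> X \<longleftrightarrow> even i)"
  using i
proof (induction i)
  case 0
  then show ?case using p by (auto simp: walk_in_def hd_conv_nth)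
next
  case (Suc i)
  then have "E (p ! i) (p ! Suc i)" using p by (auto simp: walk_in_def)
  then have "p ! Suc i \<in> X \<longleftrightarrow> p ! i \<notin> X" using classes by (auto simp: color_classes_def)
  with Suc show ?case by auto
qed

lemma level_parity:
  assumes "x \<in> V" shows "x \<in> X \<longleftrightarrow> (u \<in> X \<longleftrightarrow> even (level x))"
proof -
  obtain p where p: "walk_in E V p u x" "length p = Suc (level x)" using level_walk assms by blast
  then have "p ! level x = x" using walk_in_last_nth[OF p(1)] by simp
  with walk_colour_parity[OF p(1), of "level x"] p(2) show ?thesis by simp
qed

lemma level_adj: assumes "E x y" shows "level y = level x + 1 \<or> level x = level y + 1"
proof -
  have "y \<in> X \<longleftrightarrow> x \<notin> X" using classes assms by (auto simp: color_classes_def)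
  then have "level x \<noteq> level y" using level_parity adj_in_V assms by metis
  moreover have "level y \<le> level x + 1" "level x \<le> level y + 1" using level_adj_le sym assms by auto
  ultimately show ?thesis by linarith
qed

lemma level_pred:
  assumes "x \<in> V" "level x > 0"
  shows "\<exists>t. E t x \<and> level t + 1 = level x"
proof -
  obtain p where p: "walk_in E V p u x" "length p = Suc (level x)" using level_walk assms by blast
  define t where "t = p ! (level x - 1)"
  have "Suc (level x - 1) < length p" "Suc (level x - 1) = level x" using p assms by auto
  then have "E t (p ! level x)" using p(1) unfolding walk_in_def t_def by metis
  moreover have "p ! level x = x" using walk_in_last_nth[OF p(1)] p(2) by simp
  moreover have "level t \<le> level x - 1" using level_nth_le[OF p(1)] p assms t_def by simp
  ultimately show ?thesis using level_adj by fastforce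
qed

lemma connected_on_delete_farthest:
  assumes v: "v \<in> V" "\<forall>x\<in>V. level x \<le> level v"
  shows "connected_on E (V - {v})"
proof (cases "v = u")
  case True
  then have "V - {v} = {}" using v level_root level_eq_0 by fastforce
  then show ?thesis unfolding connected_on_def by blast
next
  case False
  show ?thesis
  proof (rule connected_onI_root[OF sym])
    fix x assume x: "x \<in> V - {v}"
    then obtain p where p: "walk_in E V p u x" "length p = Suc (level x)" using level_walk by blast
    have "v \<notin> set p"
    proof
      assume "v \<in> set p"
      then obtain i where i: "i < length p" "v = p ! i" by (metis in_set_conv_nth)
      have "level v \<le> i" using level_nth_le[OF p(1) i(1)] i by simp
      then have "i = length p - 1" using i p v x by force
      then show False using i x walk_in_last_nth[OF p(1)] by simp
    qed
    then show "\<exists>p. walk_in E (V - {v}) p u x"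
      using p walk_in_subset[OF p(1)] by (auto simp: walk_in_def)
  qed
qed

end

section \<open>Removable vertices of BDH graphs\<close>

definition pendant_or_twin :: "'a set \<Rightarrow> ('a \<Rightarrow> 'a \<Rightarrow> bool) \<Rightarrow> 'a \<Rightarrow> bool" where
  "pendant_or_twin V E z \<longleftrightarrow> (\<exists>q. nbhd V E z \<subseteq> {q}) \<or>
     (\<exists>z'\<in>V. z' \<noteq> z \<and> nbhd V E z' = nbhd V E z \<and> nbhd V E z \<noteq> {})"

locale rooted_BDH_graph = rooted_bipartite_graph +
  assumes distance_hereditary: "distance_hereditary V E"
begin

lemma induced_lipschitz_bound:
  assumes S: "S \<subseteq> V" "connected_on E S" "v \<in> S" "w \<in> S"
    and f: "\<And>x y. x \<in> S \<Longrightarrow> y \<in> S \<Longrightarrow> E x y \<Longrightarrow> f y \<le> f x + (1::int)"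
  shows "f w \<le> f v + int (dist_in E V v w)"
  using dist_in_lipschitz_bound[OF S(2-4) f] distance_hereditary S
  by (simp add: distance_hereditary_def)

lemma lower_neighbour_shared:
  assumes av: "E a v" and bv: "E b v" and ab: "level b = level a"
    and v: "level v = level a + 1" and as: "E a s" and s: "level s + 1 = level a"
  shows "E b s"
proof (rule ccontr)
  assume bs: "\<not> E b s"
  obtain Q where Q: "walk_in E V Q u s" "length Q = Suc (level s)"
    using level_walk adj_in_V as by blast
  define P where "P = Q @ [a, v, b]"
  have P: "walk_in E V P u b"
    using walk_in_snoc[OF walk_in_snoc[OF walk_in_snoc[OF Q(1) sym[OF as]] av] sym[OF bv]]
      adj_in_V av bv by (simp add: P_def)
  have u_ne_b: "u \<noteq> b" using ab s level_root by auto
  txt \<open>In the subgraph induced by the walk, \<open>b\<close> can only be entered from \<open>v\<close>,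
    so its distance from \<open>u\<close> there is at least \<open>level b + 2\<close>.\<close>
  define f where "f x = (if x = b then int (level b) + 2 else int (level x))" for x
  have "f y \<le> f x + 1" if "x \<in> set P" "y \<in> set P" "E x y" for x y
  proof (cases "y = b")
    case True
    have "x \<noteq> b" "x \<noteq> a" using irrefl level_adj[of a b] ab that True by auto
    moreover have "x \<notin> set Q"
    proof
      assume "x \<in> set Q"
      then obtain i where i: "i < length Q" "x = Q ! i" by (metis in_set_conv_nth)
      have "level x \<le> i" using level_nth_le[OF Q(1) i(1)] i by simp
      then have "i = length Q - 1" using level_adj[OF that(3)] True ab s i Q by auto
      then have "x = s" using i walk_in_last_nth[OF Q(1)] by simp
      then show False using bs sym that True by blast
    qed
    ultimately have "x = v" using that(1) by (auto simp: P_def)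
    then show ?thesis using True v ab \<open>x \<noteq> b\<close> by (simp add: f_def)
  next
    case False
    then show ?thesis using level_adj_le[OF that(3)] by (auto simp: f_def)
  qed
  then have "f b \<le> f u + int (dist_in E V u b)"
    using induced_lipschitz_bound[of "set P" u b f] P connected_on_walk_vertices[OF sym P]
    by (auto simp: walk_in_def)
  then show False using u_ne_b level_root by (simp add: f_def level_def)
qed

lemma no_long_detour:
  assumes av: "E a v" and aw: "E a w"
    and vb: "E v b" and bs: "E b s" and sd: "E s d" and dw: "E d w"
    and vd: "\<not> E v d" and bw: "\<not> E b w"
    and levels: "level w = level v" "level b + 1 = level v" "level d + 1 = level v"
      "level s + 2 = level v"
  shows False
proof -
  txt \<open>\<open>P\<close> is an induced path of length 4 between two vertices at distance 2.\<close>
  define P where "P = [v, b, s, d, w]"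
  have P: "walk_in E V P v w"
    using adj_in_V vb bs sd dw unfolding walk_in_def P_def
    by (auto simp: less_Suc_eq nth_Cons split: nat.splits)
  have non_adj: "\<not> E v s" "\<not> E s w" "\<not> E v w" "\<not> E b d"
    using level_adj[of v s] level_adj[of s w] level_adj[of v w] level_adj[of b d] levels by auto
  have distinct: "distinct P"
    using levels vd vb sym[OF dw] by (auto simp: P_def)
  define f where "f x = (if x = v then 0 else if x = b then 1 else if x = s then 2
     else if x = d then 3 else (4::int))" for x
  have "f y \<le> f x + 1" if "x \<in> set P" "y \<in> set P" "E x y" for x y
    using that non_adj vd bw irrefl sym[of b w] sym[of d v] sym[of s v] sym[of w s]
      sym[of w v] sym[of d b] distinct
    by (auto simp: P_def f_def)
  then have "f w \<le> f v + int (dist_in E V v w)"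
    using induced_lipschitz_bound[of "set P" v w f] P connected_on_walk_vertices[OF sym P]
    by (auto simp: walk_in_def)
  moreover have "walk_in E V [v, a, w] v w"
    using adj_in_V av aw sym[OF av] unfolding walk_in_def
    by (auto simp: less_Suc_eq nth_Cons split: nat.splits)
  then have "dist_in E V v w \<le> 2" using dist_in_le_walk by fastforce
  moreover have "f v = 0" "f w = 4" using distinct by (auto simp: f_def P_def)
  ultimately show False by linarith
qed

lemma top_level_neighbours_nbhd_subset:
  assumes top: "\<forall>x\<in>V. level x \<le> level v"
    and min_degree: "\<forall>x\<in>V. level x = level v \<longrightarrow> card (nbhd V E v) \<le> card (nbhd V E x)"
    and va: "E v a" and vb: "E v b" and ab: "a \<noteq> b"
  shows "nbhd V E a \<subseteq> nbhd V E b"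
proof
  fix x assume "x \<in> nbhd V E a"
  then have ax: "E a x" by (simp add: nbhd_iff[OF simple])
  have below_top: "level t + 1 = level v" if "E y t" "level y = level v" for y t
    using level_adj[OF that(1)] top adj_in_V that by force
  have la: "level a + 1 = level v" using below_top[OF va refl] .
  have lb: "level b = level a" using below_top[OF vb refl] la by simp
  have "level a \<noteq> 0"
    using level_eq_0[of a] level_eq_0[of b] adj_in_V[OF va] adj_in_V[OF vb] lb ab by auto
  then obtain s where sa: "E s a" and ls: "level s + 1 = level a"
    using level_pred adj_in_V va by blast
  have bs: "E b s"
    using lower_neighbour_shared[OF sym[OF va] sym[OF vb] lb _ sym[OF sa] ls] la by simp
  consider "level x + 1 = level a" | "level x = level v"
    using level_adj[OF ax] la by auto
  then show "x \<in> nbhd V E b"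
  proof cases
    case 1
    then show ?thesis
      using lower_neighbour_shared[OF sym[OF va] sym[OF vb] lb _ ax] la
      by (simp add: nbhd_iff[OF simple])
  next
    case 2
    txt \<open>By the choice of \<open>v\<close>, \<open>x\<close> has a neighbour \<open>d\<close> outside \<open>N(v)\<close>; then
      \<open>v b s d x\<close> is a forbidden detour.\<close>
    show ?thesis
    proof (rule ccontr)
      assume "x \<notin> nbhd V E b"
      then have bx: "\<not> E b x" by (simp add: nbhd_iff[OF simple])
      have "card (nbhd V E v) \<le> card (nbhd V E x)" using min_degree 2 adj_in_V[OF ax] by blast
      moreover have "finite (nbhd V E v)" using finite_V by (simp add: nbhd_def)
      ultimately have "\<not> nbhd V E x \<subset> nbhd V E v" using psubset_card_mono leD by blast
      moreover have "b \<in> nbhd V E v" "b \<notin> nbhd V E x"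
        using vb bx sym by (auto simp: nbhd_iff[OF simple])
      ultimately obtain d where "d \<in> nbhd V E x" "d \<notin> nbhd V E v" by blast
      then have xd: "E x d" and vd: "\<not> E v d" by (auto simp: nbhd_iff[OF simple])
      have ld: "level d + 1 = level v" using below_top[OF xd 2] .
      have ds: "E d s"
        using lower_neighbour_shared[OF ax sym[OF xd] _ _ sym[OF sa] ls] la ld 2 by simp
      show False
        using no_long_detour[OF sym[OF va] ax vb bs sym[OF ds] sym[OF xd] vd bx] 2 lb la ld ls
        by simp
    qed
  qed
qed

lemma exists_removable_vertex: "\<exists>z\<in>V. connected_on E (V - {z}) \<and> pendant_or_twin V E z"
proof -
  have "Max (level ` V) \<in> level ` V" using finite_V root by (intro Max_in) auto
  then obtain t where t: "t \<in> V" "level t = Max (level ` V)" by force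
  obtain v where v: "v \<in> V" "level v = level t"
    and min_degree: "\<forall>x. x \<in> V \<and> level x = level t \<longrightarrow> card (nbhd V E v) \<le> card (nbhd V E x)"
    using ex_has_least_nat[of "\<lambda>x. x \<in> V \<and> level x = level t" t "\<lambda>x. card (nbhd V E x)"] t
    by auto
  have top: "\<forall>x\<in>V. level x \<le> level v" using t v finite_V by simp
  show ?thesis
  proof (cases "\<exists>a b. E v a \<and> E v b \<and> a \<noteq> b")
    case True
    then obtain a b where ab: "E v a" "E v b" "a \<noteq> b" by blast
    have twins: "nbhd V E a = nbhd V E b"
      using top_level_neighbours_nbhd_subset[OF top _ ab]
        top_level_neighbours_nbhd_subset[OF top _ ab(2,1)] ab(3) min_degree v by auto
    have "v \<in> nbhd V E b" using sym[OF ab(2)] by (simp add: nbhd_iff[OF simple])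
    moreover have "connected_on E (V - {b})"
      using connected_on_delete_twin[OF simple connected_V _ ab(3) twins] adj_in_V ab by blast
    ultimately show ?thesis using ab adj_in_V twins unfolding pendant_or_twin_def by blast
  next
    case False
    have "\<exists>q. nbhd V E v \<subseteq> {q}"
    proof (cases "nbhd V E v = {}")
      case False
      then obtain q where "q \<in> nbhd V E v" by blast
      then have "nbhd V E v \<subseteq> {q}"
        using \<open>\<not> (\<exists>a b. E v a \<and> E v b \<and> a \<noteq> b)\<close> by (auto simp: nbhd_iff[OF simple])
      then show ?thesis ..
    qed simp
    then show ?thesis using connected_on_delete_farthest[OF v(1) top] v
      unfolding pendant_or_twin_def by blast
  qed
qed

end

definition delete_vertex :: "('a \<Rightarrow> 'a \<Rightarrow> bool) \<Rightarrow> 'a \<Rightarrow> 'a \<Rightarrow> 'a \<Rightarrow> bool" where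
  "delete_vertex E z x y \<longleftrightarrow> E x y \<and> x \<noteq> z \<and> y \<noteq> z"

lemma walk_in_delete_vertex: "z \<notin> S \<Longrightarrow> walk_in (delete_vertex E z) S p a b = walk_in E S p a b"
  unfolding walk_in_def delete_vertex_def by (metis Suc_lessD nth_mem subsetD)

lemma connected_on_delete_vertex: "z \<notin> S \<Longrightarrow> connected_on (delete_vertex E z) S = connected_on E S"
  by (simp add: connected_on_def walk_in_delete_vertex)

lemma dist_in_delete_vertex: "z \<notin> S \<Longrightarrow> dist_in (delete_vertex E z) S a b = dist_in E S a b"
  by (simp add: dist_in_def walk_in_delete_vertex)

lemma nbhd_delete_vertex: "y \<noteq> z \<Longrightarrow> nbhd (V - {z}) (delete_vertex E z) y = nbhd V E y - {z}"
  by (auto simp: nbhd_def delete_vertex_def)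

lemma BDH_delete_vertex:
  assumes G: "connected_graph V E" "BDH V E" "color_classes V E X Y"
    and conn: "connected_on E (V - {z})"
  shows "connected_graph (V - {z}) (delete_vertex E z) \<and> BDH (V - {z}) (delete_vertex E z) \<and>
    color_classes (V - {z}) (delete_vertex E z) (X - {z}) (Y - {z})"
proof -
  let ?E = "delete_vertex E z"
  have simple: "simple_graph (V - {z}) ?E"
    using G(1) by (auto simp: connected_graph_def simple_graph_def delete_vertex_def)
  have classes: "color_classes (V - {z}) ?E (X - {z}) (Y - {z})"
    using G(3) by (auto simp: color_classes_def delete_vertex_def)
  have dh: "distance_hereditary V E"
    using G(2) by (simp add: BDH_def)
  have "dist_in ?E S a b = dist_in ?E (V - {z}) a b"
    if S: "S \<subseteq> V - {z}" "connected_on ?E S" "a \<in> S" "b \<in> S" for S a b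
  proof -
    have "z \<notin> S" using S by auto
    then have "connected_on E S" using S(2) by (simp add: connected_on_delete_vertex)
    have "dist_in ?E S a b = dist_in E S a b"
      using \<open>z \<notin> S\<close> by (simp add: dist_in_delete_vertex)
    also have "\<dots> = dist_in E V a b"
      using dh S \<open>connected_on E S\<close> by (auto simp: distance_hereditary_def)
    also have "\<dots> = dist_in E (V - {z}) a b"
      using dh S conn unfolding distance_hereditary_def by (metis Diff_subset subsetD)
    finally show ?thesis by (simp add: dist_in_delete_vertex)
  qed
  then have "distance_hereditary (V - {z}) ?E"
    using simple by (simp add: distance_hereditary_def)
  moreover have "bipartite (V - {z}) ?E"
    using classes unfolding bipartite_def color_classes_def by blast
  ultimately show ?thesis
    using simple classes conn by (simp add: connected_graph_def BDH_def connected_on_delete_vertex)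
qed

section \<open>Arborescences and their directed paths\<close>

lemma arborescence_no_loop:
  assumes A: "arborescence W R r"
  shows "(a, a) \<notin> R"
proof
  assume aa: "(a, a) \<in> R"
  have "(w, w) \<notin> R" if "(r, w) \<in> R\<^sup>*" for w
    using that
  proof (induction rule: rtrancl_induct)
    case base
    then show ?case using A by (simp add: arborescence_def)
  next
    case (step v w)
    show ?case
    proof
      assume ww: "(w, w) \<in> R"
      then have "w \<in> W" "w \<noteq> r" using A by (auto simp: arborescence_def)
      then have "v = w" using A ww step.hyps(2) unfolding arborescence_def by blast
      then show False using step.IH ww by simp
    qed
  qed
  then show False using A aa by (auto simp: arborescence_def)
qed

lemma arborescence_add_leaf:
  assumes A: "arborescence W R r" and p: "p \<in> W" and n: "n \<notin> W"
  shows "arborescence (insert n W) (insert (p, n) R) r"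
proof -
  have mono: "R\<^sup>* \<subseteq> (insert (p, n) R)\<^sup>*" by (rule rtrancl_mono) blast
  moreover have "(r, p) \<in> R\<^sup>*" using A p by (simp add: arborescence_def)
  ultimately have "(r, n) \<in> (insert (p, n) R)\<^sup>*"
    by (meson insertI1 rtrancl.rtrancl_into_rtrancl subsetD)
  then have reach: "\<forall>w\<in>insert n W. (r, w) \<in> (insert (p, n) R)\<^sup>*"
    using A mono by (auto simp: arborescence_def)
  have "\<exists>!u. (u, w) \<in> insert (p, n) R" if "w \<in> insert n W" "w \<noteq> r" for w
    using A n that unfolding arborescence_def by (cases "w = n") auto
  then show ?thesis
    using A p n reach unfolding arborescence_def by auto
qed

lemma arborescence_subdivide:
  assumes A: "arborescence W R r" and ab: "(a, b) \<in> R" and c: "c \<notin> W"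
  shows "arborescence (insert c W) (R - {(a, b)} \<union> {(a, c), (c, b)}) r"
proof -
  define R' where "R' = R - {(a, b)} \<union> {(a, c), (c, b)}"
  have RW: "R \<subseteq> W \<times> W" and root: "\<forall>u. (u, r) \<notin> R"
    and parent: "\<forall>w\<in>W. w \<noteq> r \<longrightarrow> (\<exists>!u. (u, w) \<in> R)"
    using A by (auto simp: arborescence_def)
  have abW: "a \<in> W" "b \<in> W" and br: "b \<noteq> r" using ab root RW by auto
  have "(a, b) \<in> R'\<^sup>*" by (auto simp: R'_def intro: rtrancl_trans)
  then have "R \<subseteq> R'\<^sup>*" by (auto simp: R'_def)
  then have mono: "R\<^sup>* \<subseteq> R'\<^sup>*" by (rule rtrancl_subset_rtrancl)
  have "(r, a) \<in> R\<^sup>*" using A abW by (simp add: arborescence_def)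
  then have "(r, c) \<in> R'\<^sup>*" using mono by (auto simp: R'_def intro: rtrancl_into_rtrancl)
  then have reach: "\<forall>w\<in>insert c W. (r, w) \<in> R'\<^sup>*" using A mono by (auto simp: arborescence_def)
  have "\<exists>!u. (u, w) \<in> R'" if w: "w \<in> insert c W" "w \<noteq> r" for w
  proof (cases "w = c")
    case True
    then show ?thesis using RW c abW by (intro ex1I[of _ a]) (auto simp: R'_def)
  next
    case False
    have a_parent: "(u, b) \<in> R \<Longrightarrow> u = a" for u using parent ab br abW by blast
    show ?thesis
    proof (cases "w = b")
      case True
      then show ?thesis using RW c abW a_parent by (intro ex1I[of _ c]) (auto simp: R'_def)
    next
      case False
      then have "(u, w) \<in> R' \<longleftrightarrow> (u, w) \<in> R" for u using \<open>w \<noteq> c\<close> by (auto simp: R'_def)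
      then show ?thesis using parent w \<open>w \<noteq> c\<close> by auto
    qed
  qed
  moreover have "R' \<subseteq> insert c W \<times> insert c W" "\<forall>u. (u, r) \<notin> R'"
    using RW abW root br c A by (auto simp: R'_def arborescence_def)
  ultimately show ?thesis
    using A reach unfolding arborescence_def R'_def[symmetric] by auto
qed

fun path_arcs :: "'b list \<Rightarrow> ('b \<times> 'b) set" where
  "path_arcs (x # y # zs) = insert (x, y) (path_arcs (y # zs))"
| "path_arcs _ = {}"

lemma path_arcs_Cons:
  "path_arcs (x # ys) = (if ys = [] then {} else insert (x, hd ys) (path_arcs ys))"
  by (cases ys) auto

lemma path_arcs_conv_nth: "path_arcs vs = {(vs ! i, vs ! Suc i) | i. Suc i < length vs}"
proof (induction vs rule: path_arcs.induct)
  case (1 x y zs)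
  let ?arcs = "\<lambda>vs. {(vs ! i, vs ! Suc i) | i. Suc i < length vs}"
  have "?arcs (x # y # zs) = insert (x, y) (?arcs (y # zs))"
  proof (intro equalityI subsetI)
    fix e assume "e \<in> ?arcs (x # y # zs)"
    then obtain i where "e = ((x # y # zs) ! i, (x # y # zs) ! Suc i)" "Suc i < length (x # y # zs)"
      by blast
    then show "e \<in> insert (x, y) (?arcs (y # zs))" by (cases i) auto
  next
    fix e assume "e \<in> insert (x, y) (?arcs (y # zs))"
    then consider "e = (x, y)"
      | j where "e = ((y # zs) ! j, (y # zs) ! Suc j)" "Suc j < length (y # zs)"
      by blast
    then show "e \<in> ?arcs (x # y # zs)"
    proof cases
      case 1
      then show ?thesis by (intro CollectI exI[of _ 0]) simp
    next
      case 2
      then show ?thesis by (intro CollectI exI[of _ "Suc j"]) simp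
    qed
  qed
  then show ?case using 1 by simp
qed auto

lemma path_arcs_subset: "path_arcs vs \<subseteq> set vs \<times> set vs"
  by (induction vs rule: path_arcs.induct) auto

lemma path_arcs_split: "(a, b) \<in> path_arcs vs \<Longrightarrow> \<exists>xs ys. vs = xs @ a # b # ys"
proof (induction vs rule: path_arcs.induct)
  case (1 x y zs)
  then show ?case by (auto intro: exI[of _ "[]"] exI[of _ "x # _"]) (metis Cons_eq_appendI)
qed auto

lemma path_arcs_snoc: "vs \<noteq> [] \<Longrightarrow> path_arcs (vs @ [n]) = insert (last vs, n) (path_arcs vs)"
  by (induction vs rule: path_arcs.induct) auto

lemma path_arcs_subdivide:
  assumes "distinct (xs @ a # b # ys)"
  shows "path_arcs (xs @ a # c # b # ys) =
    path_arcs (xs @ a # b # ys) - {(a, b)} \<union> {(a, c), (c, b)}"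
  using assms
proof (induction xs)
  case Nil
  then show ?case using path_arcs_subset[of "b # ys"] by auto
next
  case (Cons x xs)
  then show ?case by (auto simp: path_arcs_Cons[of x] hd_append)
qed

lemma dipath_arcs_iff: "dipath_arcs W R P \<longleftrightarrow>
   (\<exists>vs. vs \<noteq> [] \<and> distinct vs \<and> set vs \<subseteq> W \<and> path_arcs vs \<subseteq> R \<and> P = path_arcs vs)"
  unfolding dipath_arcs_def path_arcs_conv_nth by blast

lemma bij_betw_fun_upd_insert:
  assumes "bij_betw f A B" "a \<notin> A" "b \<notin> B"
  shows "bij_betw (f(a := b)) (insert a A) (insert b B)"
proof -
  have "bij_betw (f(a := b)) A B" using assms by (metis bij_betw_cong fun_upd_other)
  then show ?thesis using assms by (auto simp: bij_betw_def inj_on_def image_iff)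
qed

lemma bij_betw_fun_upd_split:
  assumes bij: "bij_betw f A B" and x: "x \<in> A" and y: "y \<notin> A"
    and new: "e \<notin> B" "e' \<notin> B" "e \<noteq> e'"
  shows "bij_betw (f(x := e, y := e')) (insert y A) (B - {f x} \<union> {e, e'})"
proof -
  have "bij_betw f (A - {x}) (B - {f x})"
    using bij_betw_DiffI[OF bij, of "{x}" "{f x}"] x bij_betwE[OF bij] by auto
  then have "bij_betw (f(x := e)) (insert x (A - {x})) (insert e (B - {f x}))"
    by (rule bij_betw_fun_upd_insert) (use new in auto)
  then have "bij_betw (f(x := e, y := e'))
      (insert y (insert x (A - {x}))) (insert e' (insert e (B - {f x})))"
    by (rule bij_betw_fun_upd_insert) (use x y new in auto)
  moreover have "insert x (A - {x}) = A" "insert e' (insert e (B - {f x})) = B - {f x} \<union> {e, e'}"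
    using x by auto
  ultimately show ?thesis by simp
qed

lemma dipath_arcs_mono: "dipath_arcs W R P \<Longrightarrow> W \<subseteq> W' \<Longrightarrow> R \<subseteq> R' \<Longrightarrow> dipath_arcs W' R' P"
  unfolding dipath_arcs_iff by blast

lemma dipath_arcs_extend_end:
  assumes "dipath_arcs W R P"
  shows "\<exists>p\<in>W. \<forall>n. n \<notin> W \<longrightarrow> dipath_arcs (insert n W) (insert (p, n) R) (insert (p, n) P)"
proof -
  obtain vs where vs: "vs \<noteq> []" "distinct vs" "set vs \<subseteq> W" "path_arcs vs \<subseteq> R" "P = path_arcs vs"
    using assms unfolding dipath_arcs_iff by blast
  have "dipath_arcs (insert n W) (insert (last vs, n) R) (insert (last vs, n) P)" if "n \<notin> W" for n
    unfolding dipath_arcs_iff using vs that path_arcs_snoc[OF vs(1), of n]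
    by (intro exI[of _ "vs @ [n]"]) auto
  moreover have "last vs \<in> W" using vs by auto
  ultimately show ?thesis by blast
qed

lemma dipath_arcs_subdivide:
  assumes P: "dipath_arcs W R P" and ab: "(a, b) \<in> P" and c: "c \<notin> W"
  shows "dipath_arcs (insert c W) (R - {(a, b)} \<union> {(a, c), (c, b)})
    (P - {(a, b)} \<union> {(a, c), (c, b)})"
proof -
  obtain vs where vs: "vs \<noteq> []" "distinct vs" "set vs \<subseteq> W" "path_arcs vs \<subseteq> R" "P = path_arcs vs"
    using P unfolding dipath_arcs_iff by blast
  then obtain xs ys where split: "vs = xs @ a # b # ys" using path_arcs_split ab by metis
  show ?thesis
    unfolding dipath_arcs_iff using vs c path_arcs_subdivide[of xs a b ys c]
    by (intro exI[of _ "xs @ a # c # b # ys"]) (auto simp: split)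
qed

lemma dipath_arcs_subdivide_other:
  assumes "dipath_arcs W R P" "(a, b) \<notin> P"
  shows "dipath_arcs (insert c W) (R - {(a, b)} \<union> {(a, c), (c, b)}) P"
proof -
  have "dipath_arcs W (R - {(a, b)}) P"
    using assms unfolding dipath_arcs_iff by blast
  then show ?thesis by (rule dipath_arcs_mono) auto
qed

section \<open>Representations by arcs of an arborescence\<close>

text \<open>The neighbourhood function \<open>N\<close> is a parameter, so that the representation of
  \<open>G - z\<close> can be stated with the neighbourhoods \<open>N y - {z}\<close> of \<open>G\<close>.\<close>

definition arborescence_representation ::
    "'b set \<Rightarrow> ('b \<times> 'b) set \<Rightarrow> 'b \<Rightarrow> ('a \<Rightarrow> 'b \<times> 'b) \<Rightarrow> 'a set \<Rightarrow> 'a set \<Rightarrow> ('a \<Rightarrow> 'a set) \<Rightarrow> bool" where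
  "arborescence_representation W R r \<phi> X Y N \<longleftrightarrow>
     arborescence W R r \<and> bij_betw \<phi> X R \<and> (\<forall>y\<in>Y. dipath_arcs W R (\<phi> ` N y))"

lemma representation_insert_Y:
  assumes rep: "arborescence_representation W R r \<phi> X Y (\<lambda>y. N y - {z})"
    and bipartite: "\<forall>y\<in>insert z Y. N y \<subseteq> X" and z: "z \<notin> X"
    and pendant_or_twin: "(\<exists>q. N z \<subseteq> {q}) \<or> (\<exists>z'\<in>Y. N z' = N z)"
  shows "arborescence_representation W R r \<phi> X (insert z Y) N"
proof -
  have "N y - {z} = N y" if "y \<in> Y" for y using bipartite z that by blast
  then have A: "arborescence W R r" and bij: "bij_betw \<phi> X R"
    and paths: "\<forall>y\<in>Y. dipath_arcs W R (\<phi> ` N y)"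
    using rep by (auto simp: arborescence_representation_def)
  have "dipath_arcs W R (\<phi> ` N z)"
    using pendant_or_twin
  proof (elim disjE exE bexE)
    fix q assume q: "N z \<subseteq> {q}"
    show ?thesis
    proof (cases "N z = {}")
      case True
      then show ?thesis
        using A unfolding dipath_arcs_iff by (intro exI[of _ "[r]"]) (simp add: arborescence_def)
    next
      case False
      then have "N z = {q}" "q \<in> X" using q bipartite by auto
      moreover obtain a b where "\<phi> q = (a, b)" by fastforce
      ultimately have "\<phi> ` N z = path_arcs [a, b]" "(a, b) \<in> R"
        using bij_betwE[OF bij] by auto
      moreover have "a \<noteq> b" using arborescence_no_loop[OF A] \<open>(a, b) \<in> R\<close> by blast
      moreover have "a \<in> W" "b \<in> W" using A \<open>(a, b) \<in> R\<close> by (auto simp: arborescence_def)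
      ultimately show ?thesis unfolding dipath_arcs_iff by (intro exI[of _ "[a, b]"]) simp
    qed
  next
    fix z' assume "z' \<in> Y" "N z' = N z"
    then show ?thesis using paths by metis
  qed
  then show ?thesis using A bij paths by (simp add: arborescence_representation_def)
qed

lemma representation_add_leaf:
  assumes rep: "arborescence_representation W R r \<phi> X Y (\<lambda>y. N y - {z})"
    and z: "z \<notin> X" and n: "n \<notin> W"
    and pendant: "\<forall>y\<in>Y. z \<in> N y \<longrightarrow> y = q"
  shows "\<exists>R' \<phi>'. arborescence_representation (insert n W) R' r \<phi>' (insert z X) Y N"
proof -
  have A: "arborescence W R r" and bij: "bij_betw \<phi> X R"
    and paths: "\<forall>y\<in>Y. dipath_arcs W R (\<phi> ` (N y - {z}))"
    using rep by (auto simp: arborescence_representation_def)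
  obtain p where p: "p \<in> W"
    and q_path: "q \<in> Y \<Longrightarrow>
      dipath_arcs (insert n W) (insert (p, n) R) (insert (p, n) (\<phi> ` (N q - {z})))"
  proof (cases "q \<in> Y")
    case True
    then show ?thesis using that dipath_arcs_extend_end paths n by meson
  next
    case False
    then show ?thesis using that[of r] A by (simp add: arborescence_def)
  qed
  define \<phi>' where "\<phi>' = \<phi>(z := (p, n))"
  have "arborescence (insert n W) (insert (p, n) R) r"
    using arborescence_add_leaf[OF A p n] .
  moreover have "bij_betw \<phi>' (insert z X) (insert (p, n) R)"
    unfolding \<phi>'_def using bij_betw_fun_upd_insert[OF bij z] A n by (auto simp: arborescence_def)
  moreover have "dipath_arcs (insert n W) (insert (p, n) R) (\<phi>' ` N y)" if y: "y \<in> Y" for y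
  proof (cases "z \<in> N y")
    case True
    then have "y = q" "\<phi>' ` N y = insert (p, n) (\<phi> ` (N q - {z}))"
      using pendant y by (auto simp: \<phi>'_def image_def)
    then show ?thesis using q_path y by simp
  next
    case False
    then have "\<phi>' ` N y = \<phi> ` (N y - {z})" by (auto simp: \<phi>'_def image_def)
    then show ?thesis using paths y by (auto intro: dipath_arcs_mono)
  qed
  ultimately show ?thesis unfolding arborescence_representation_def by blast
qed

lemma representation_subdivide:
  assumes rep: "arborescence_representation W R r \<phi> X Y (\<lambda>y. N y - {z})"
    and z: "z \<notin> X" and z': "z' \<in> X" and c: "c \<notin> W"
    and bipartite: "\<forall>y\<in>Y. N y \<subseteq> insert z X"
    and twins: "\<forall>y\<in>Y. z \<in> N y \<longleftrightarrow> z' \<in> N y"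
  shows "\<exists>R' \<phi>'. arborescence_representation (insert c W) R' r \<phi>' (insert z X) Y N"
proof -
  have A: "arborescence W R r" and bij: "bij_betw \<phi> X R"
    and paths: "\<forall>y\<in>Y. dipath_arcs W R (\<phi> ` (N y - {z}))"
    using rep by (auto simp: arborescence_representation_def)
  obtain a b where ab: "\<phi> z' = (a, b)" by fastforce
  have abR: "(a, b) \<in> R" using bij_betwE[OF bij] z' ab by force
  have new: "(a, c) \<notin> R" "(c, b) \<notin> R" "(a, c) \<noteq> (c, b)"
    using A abR c by (auto simp: arborescence_def)
  define R' where "R' = R - {(a, b)} \<union> {(a, c), (c, b)}"
  define \<psi> where "\<psi> = \<phi>(z' := (a, c), z := (c, b))"
  have "arborescence (insert c W) R' r"
    unfolding R'_def using arborescence_subdivide[OF A abR c] .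
  moreover have "bij_betw \<psi> (insert z X) R'"
    using bij_betw_fun_upd_split[OF bij z' z new] ab by (simp add: \<psi>_def R'_def)
  moreover have "dipath_arcs (insert c W) R' (\<psi> ` N y)" if y: "y \<in> Y" for y
  proof -
    have NX: "N y - {z} \<subseteq> X" using bipartite y by blast
    have inj: "inj_on \<phi> X" using bij by (simp add: bij_betw_def)
    show ?thesis
    proof (cases "z' \<in> N y")
      case True
      have zz': "z \<noteq> z'" using z z' by blast
      define M where "M = N y - {z} - {z'}"
      have "N y = insert z (insert z' M)" using True twins y by (auto simp: M_def)
      moreover have "\<psi> z = (c, b)" "\<psi> z' = (a, c)" using zz' by (simp_all add: \<psi>_def)
      ultimately have "\<psi> ` N y = insert (c, b) (insert (a, c) (\<psi> ` M))" by simp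
      also have "\<psi> ` M = \<phi> ` M" by (rule image_cong) (auto simp: \<psi>_def M_def)
      also have "\<phi> ` M = \<phi> ` (N y - {z}) - {(a, b)}"
        using inj_on_image_set_diff[OF inj, of "N y - {z}" "{z'}"] NX z' ab by (auto simp: M_def)
      finally have "\<psi> ` N y = \<phi> ` (N y - {z}) - {(a, b)} \<union> {(a, c), (c, b)}" by auto
      moreover have "(a, b) \<in> \<phi> ` (N y - {z})" using True z z' ab by force
      ultimately show ?thesis
        using dipath_arcs_subdivide[of W R _ a b c] paths y c by (simp add: R'_def)
    next
      case False
      then have "\<psi> ` N y = \<phi> ` (N y - {z})" using twins y by (auto simp: \<psi>_def image_def)
      moreover have "(a, b) \<notin> \<phi> ` (N y - {z})"
      proof
        assume "(a, b) \<in> \<phi> ` (N y - {z})"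
        then obtain w where "w \<in> N y - {z}" "\<phi> w = \<phi> z'" using ab by (metis imageE)
        then show False using inj_onD[OF inj] NX z' False by blast
      qed
      ultimately show ?thesis
        using dipath_arcs_subdivide_other[of W R _ a b c] paths y by (simp add: R'_def)
    qed
  qed
  ultimately show ?thesis unfolding arborescence_representation_def by blast
qed

lemma representation_insert_vertex:
  assumes G: "simple_graph V E" "color_classes V E X Y" and z: "z \<in> V"
    and removable: "pendant_or_twin V E z"
    and rep: "arborescence_representation W R r \<phi> (X - {z}) (Y - {z}) (\<lambda>y. nbhd V E y - {z})"
    and n: "n \<notin> W"
  shows "\<exists>W' R' \<phi>'. arborescence_representation W' R' r \<phi>' X Y (nbhd V E)"
proof -
  let ?N = "nbhd V E"
  have sides: "\<forall>y\<in>Y. ?N y \<subseteq> X" "\<forall>x\<in>X. ?N x \<subseteq> Y" and XY: "X \<union> Y = V" "X \<inter> Y = {}"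
    using G by (auto simp: color_classes_def nbhd_def)
  have N_sym: "x \<in> ?N y \<longleftrightarrow> y \<in> ?N x" for x y
    using G(1) by (auto simp: nbhd_iff simple_graph_def)
  have twin_side: "z' \<in> X \<longleftrightarrow> z \<in> X"
    if "?N z' = ?N z" "?N z \<noteq> {}" "z' \<in> V" for z'
    using that sides XY z by blast
  consider "z \<notin> X" "X - {z} = X" "insert z (Y - {z}) = Y"
    | "z \<in> X" "Y - {z} = Y" "insert z (X - {z}) = X"
    using z XY by blast
  then show ?thesis
  proof cases
    case 1
    have "(\<exists>q. ?N z \<subseteq> {q}) \<or> (\<exists>z'\<in>Y - {z}. ?N z' = ?N z)"
      using removable twin_side 1 XY unfolding pendant_or_twin_def by blast
    moreover have "arborescence_representation W R r \<phi> X (Y - {z}) (\<lambda>y. ?N y - {z})"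
      using rep 1 by simp
    ultimately have "arborescence_representation W R r \<phi> X (insert z (Y - {z})) ?N"
      using representation_insert_Y[of W R r \<phi> X "Y - {z}" ?N z] sides 1 by blast
    then show ?thesis unfolding 1 by blast
  next
    case 2
    have "\<exists>R' \<phi>'.
      arborescence_representation (insert n W) R' r \<phi>' (insert z (X - {z})) (Y - {z}) ?N"
      using removable unfolding pendant_or_twin_def
    proof (elim disjE exE bexE conjE)
      fix q assume "?N z \<subseteq> {q}"
      then have "\<forall>y\<in>Y - {z}. z \<in> ?N y \<longrightarrow> y = q" using N_sym by blast
      then show ?thesis using representation_add_leaf[OF rep _ n] by blast
    next
      fix z' assume "z' \<in> V" "z' \<noteq> z" "?N z' = ?N z" "?N z \<noteq> {}"
      then have "z' \<in> X - {z}" "\<forall>y\<in>Y - {z}. z \<in> ?N y \<longleftrightarrow> z' \<in> ?N y"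
        using twin_side 2 N_sym by auto
      moreover have "\<forall>y\<in>Y - {z}. ?N y \<subseteq> insert z (X - {z})" using sides by blast
      ultimately show ?thesis using representation_subdivide[OF rep _ _ n] by blast
    qed
    then show ?thesis unfolding 2 by blast
  qed
qed

lemma connected_BDH_arborescence_representation:
  assumes "connected_graph V E" "BDH V E" "color_classes V E X Y"
  shows "\<exists>(W :: nat set) R r \<phi>. arborescence_representation W R r \<phi> X Y (nbhd V E)"
  using assms
proof (induction "card V" arbitrary: V E X Y rule: less_induct)
  case less
  show ?case
  proof (cases "V = {}")
    case True
    then have "X = {}" "Y = {}" using less.prems(3) by (auto simp: color_classes_def)
    then have "arborescence_representation {0 :: nat} {} 0 \<phi> X Y (nbhd V E)" for \<phi>
      by (simp add: arborescence_representation_def arborescence_def bij_betw_def)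
    then show ?thesis by blast
  next
    case False
    then obtain u where "u \<in> V" by blast
    then interpret rooted_BDH_graph V E X Y u
      using less.prems by unfold_locales (auto simp: BDH_def)
    obtain z where z: "z \<in> V" "connected_on E (V - {z})" and removable: "pendant_or_twin V E z"
      using exists_removable_vertex by blast
    have "card (V - {z}) < card V" using finite_V z(1) by (rule card_Diff1_less)
    then obtain W :: "nat set" and R r \<phi> where
      "arborescence_representation W R r \<phi> (X - {z}) (Y - {z}) (nbhd (V - {z}) (delete_vertex E z))"
      using less.hyps BDH_delete_vertex[OF less.prems z(2)] by blast
    then have rep: "arborescence_representation W R r \<phi> (X - {z}) (Y - {z}) (\<lambda>y. nbhd V E y - {z})"
      by (simp add: arborescence_representation_def nbhd_delete_vertex)
    have "finite W" using rep by (simp add: arborescence_representation_def arborescence_def)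
    then obtain n :: nat where "n \<notin> W" using ex_new_if_finite infinite_UNIV_nat by blast
    then show ?thesis
      using representation_insert_vertex[OF simple classes z(1) removable rep] by blast
  qed
qed

theorem corollary2:
  fixes V :: "'a set" and E :: "'a \<Rightarrow> 'a \<Rightarrow> bool" and X Y :: "'a set"
  assumes "connected_graph V E"
    and "BDH V E"
    and "color_classes V E X Y"
  shows "\<exists>(W :: nat set) R r (\<phi> :: 'a \<Rightarrow> nat \<times> nat).
           arborescence W R r \<and> bij_betw \<phi> X R \<and>
           (\<forall>y\<in>Y. dipath_arcs W R (\<phi> ` nbhd V E y))"
  using connected_BDH_arborescence_representation[OF assms]
  unfolding arborescence_representation_def by blast

end
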